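(* Let $\alpha,\beta,\gamma$ be real constants with $\beta\neq 0$, $\alpha\beta\neq 3$ and $\beta^2\gamma+3\alpha\beta-9=0$. Then for every constant $a_2$, the functions $$q(t)=\pm\frac{\sqrt{9a_2(\alpha\beta-3)^2e^{-\frac{2(\alpha\beta-3)}{\beta}t}-3\beta^2(\alpha\beta-3)e^{-\frac{4(\alpha\beta-3)}{\beta}t}}}{\beta^2e^{-\frac{2(\alpha\beta-3)}{\beta}t}-3a_2(\alpha\beta-3)},\qquad p(t)=(\alpha\beta-3)\frac{q(t)}{\beta}+\frac{\beta}{3}q(t)^3,$$ on any interval where they are defined and real, solve the system $$\dot q=-p,\qquad \dot p=-\gamma q+q^3-(\alpha+\beta q^2)p,$$ so that $q$ solves the force-free Duffing–Van der Pol equation $\ddot q+(\alpha+\beta q^2)\dot q-\gamma q+q^3=0$. These are exactly the solutions on which the first integral $I_2=\big[p-(\alpha\beta-3)\frac{q}{\beta}-\frac{\beta}{3}q^3\big]e^{3t/\beta}$ vanishes (with $q\neq0$). *)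

theory Defs
  imports "HOL-Analysis.Analysis"
begin

definition expE :: "real \<Rightarrow> real \<Rightarrow> real \<Rightarrow> real" where
  "expE \<alpha> \<beta> t = exp (- (2 * (\<alpha> * \<beta> - 3) / \<beta>) * t)"

definition radicand :: "real \<Rightarrow> real \<Rightarrow> real \<Rightarrow> real \<Rightarrow> real" where
  "radicand \<alpha> \<beta> a2 t =
     9 * a2 * (\<alpha> * \<beta> - 3)^2 * expE \<alpha> \<beta> t
     - 3 * \<beta>^2 * (\<alpha> * \<beta> - 3) * exp (- (4 * (\<alpha> * \<beta> - 3) / \<beta>) * t)"

definition denom :: "real \<Rightarrow> real \<Rightarrow> real \<Rightarrow> real \<Rightarrow> real" where
  "denom \<alpha> \<beta> a2 t = \<beta>^2 * expE \<alpha> \<beta> t - 3 * a2 * (\<alpha> * \<beta> - 3)"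

text \<open>The explicit q(t); the sign s is +1 or -1 (the \<open>\<plusminus>\<close>).\<close>
definition qsol :: "real \<Rightarrow> real \<Rightarrow> real \<Rightarrow> real \<Rightarrow> real \<Rightarrow> real" where
  "qsol \<alpha> \<beta> a2 s t = s * sqrt (radicand \<alpha> \<beta> a2 t) / denom \<alpha> \<beta> a2 t"

definition psol :: "real \<Rightarrow> real \<Rightarrow> real \<Rightarrow> real \<Rightarrow> real \<Rightarrow> real" where
  "psol \<alpha> \<beta> a2 s t =
     (\<alpha> * \<beta> - 3) * qsol \<alpha> \<beta> a2 s t / \<beta> + \<beta> / 3 * (qsol \<alpha> \<beta> a2 s t)^3"

definition firstI2 :: "real \<Rightarrow> real \<Rightarrow> (real \<Rightarrow> real) \<Rightarrow> (real \<Rightarrow> real) \<Rightarrow> real \<Rightarrow> real" where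
  "firstI2 \<alpha> \<beta> q p t =
     (p t - (\<alpha> * \<beta> - 3) * q t / \<beta> - \<beta> / 3 * (q t)^3) * exp (3 * t / \<beta>)"

end

theory Submission
  imports Defs
begin

text \<open>
  Write k = \<alpha>\<beta> - 3 and E(t) = exp(-2kt/\<beta>). Along the zero set of I2, that is along
  p = kq/\<beta> + \<beta>q^3/3, the second equation of the system follows from q' = -p because
  \<beta>^2\<gamma> = -3k. What remains, q' = -kq/\<beta> - \<beta>q^3/3, is a Bernoulli equation: the quantity
  (1/q^2 + \<beta>^2/(3k)) E is constant along its solutions, and solving
  (1/q^2 + \<beta>^2/(3k)) E = a2 for q gives q^2 = radicand/denom^2, which is the explicit formula.
  Since q does not vanish on an interval, the sign in front of the root is constant.
\<close>

lemma expE_pos: "expE \<alpha> \<beta> t > 0"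
  by (simp add: expE_def)

lemma expE_has_real_derivative:
  "(expE \<alpha> \<beta> has_real_derivative - (2 * (\<alpha> * \<beta> - 3) / \<beta>) * expE \<alpha> \<beta> t) (at t)"
  unfolding expE_def[abs_def] by (rule derivative_eq_intros refl | simp)+

lemma denom_has_real_derivative:
  "(denom \<alpha> \<beta> a2 has_real_derivative - 2 * \<beta> * (\<alpha> * \<beta> - 3) * expE \<alpha> \<beta> t) (at t)"
  unfolding denom_def[abs_def]
  by (auto intro!: derivative_eq_intros expE_has_real_derivative simp: power2_eq_square)

lemma radicand_eq: "radicand \<alpha> \<beta> a2 t = - 3 * (\<alpha> * \<beta> - 3) * expE \<alpha> \<beta> t * denom \<alpha> \<beta> a2 t"
proof -
  have "exp (- (4 * (\<alpha> * \<beta> - 3) / \<beta>) * t) = expE \<alpha> \<beta> t ^ 2"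
    unfolding expE_def exp_double[symmetric] by (simp add: field_simps)
  then show ?thesis
    unfolding radicand_def denom_def by (simp add: algebra_simps power2_eq_square)
qed

lemma radicand_pos:
  assumes "\<alpha> * \<beta> \<noteq> 3" "denom \<alpha> \<beta> a2 t \<noteq> 0" "radicand \<alpha> \<beta> a2 t \<ge> 0"
  shows "radicand \<alpha> \<beta> a2 t > 0"
  using assms expE_pos[of \<alpha> \<beta> t] by (auto simp: radicand_eq order_le_less)

lemma qsol_square:
  assumes "s \<in> {1, -1}" "radicand \<alpha> \<beta> a2 t \<ge> 0"
  shows "qsol \<alpha> \<beta> a2 s t ^ 2 = radicand \<alpha> \<beta> a2 t / denom \<alpha> \<beta> a2 t ^ 2"
  using assms by (auto simp: qsol_def power_divide power_mult_distrib)

lemma psol_eq_qsol: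
  assumes "\<beta> \<noteq> 0" "s \<in> {1, -1}" "denom \<alpha> \<beta> a2 t \<noteq> 0" "radicand \<alpha> \<beta> a2 t \<ge> 0"
  shows "psol \<alpha> \<beta> a2 s t = - 3 * a2 * (\<alpha> * \<beta> - 3)^2 * qsol \<alpha> \<beta> a2 s t / (\<beta> * denom \<alpha> \<beta> a2 t)"
proof -
  define k E D q where "k = \<alpha> * \<beta> - 3" and "E = expE \<alpha> \<beta> t"
    and "D = denom \<alpha> \<beta> a2 t" and "q = qsol \<alpha> \<beta> a2 s t"
  have D_ne: "D \<noteq> 0" using assms(3) by (simp add: D_def)
  have "q ^ 2 = - 3 * k * E * D / D ^ 2"
    using qsol_square[OF assms(2,4)] radicand_eq unfolding q_def k_def E_def D_def by simp
  then have q_sq: "q ^ 2 = - 3 * k * E / D"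
    using D_ne by (simp add: power2_eq_square)
  have "psol \<alpha> \<beta> a2 s t = q * (k / \<beta> + \<beta> / 3 * q ^ 2)"
    unfolding psol_def q_def k_def by (simp add: algebra_simps power3_eq_cube power2_eq_square)
  also have "\<dots> = q * k * (D - \<beta>^2 * E) / (\<beta> * D)"
    unfolding q_sq using assms(1) D_ne by (simp add: field_simps power2_eq_square)
  also have "D - \<beta>^2 * E = - 3 * a2 * k"
    unfolding D_def E_def k_def denom_def by simp
  finally show ?thesis unfolding q_def k_def D_def by (simp add: power2_eq_square)
qed

lemma qsol_has_real_derivative:
  assumes "\<beta> \<noteq> 0" "\<alpha> * \<beta> \<noteq> 3" "s \<in> {1, -1}"
    and "denom \<alpha> \<beta> a2 t \<noteq> 0" "radicand \<alpha> \<beta> a2 t \<ge> 0"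
  shows "(qsol \<alpha> \<beta> a2 s has_real_derivative
            3 * a2 * (\<alpha> * \<beta> - 3)^2 * qsol \<alpha> \<beta> a2 s t / (\<beta> * denom \<alpha> \<beta> a2 t)) (at t)"
proof -
  define k E D R where "k = \<alpha> * \<beta> - 3" and "E = expE \<alpha> \<beta> t"
    and "D = denom \<alpha> \<beta> a2 t" and "R = radicand \<alpha> \<beta> a2 t"
  define v where "v = sqrt R"
  have R_pos: "R > 0" using radicand_pos assms(2,4,5) unfolding R_def .
  have R_eq: "R = - 3 * k * E * D" unfolding R_def k_def E_def D_def by (rule radicand_eq)
  have inv_v: "inverse v = v / (- 3 * k * E * D)"
    using R_pos unfolding v_def R_eq[symmetric] by (simp add: field_simps)
  have ne: "k \<noteq> 0" "E \<noteq> 0" "D \<noteq> 0"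
    using assms(2,4) expE_pos[of \<alpha> \<beta> t] by (auto simp: k_def E_def D_def)
  have "radicand \<alpha> \<beta> a2 = (\<lambda>t. - 3 * k * (expE \<alpha> \<beta> t * denom \<alpha> \<beta> a2 t))"
    by (auto simp: radicand_eq k_def)
  then have "(radicand \<alpha> \<beta> a2 has_real_derivative
               - 3 * k * (- (2 * k / \<beta>) * E * D + E * (- 2 * \<beta> * k * E))) (at t)"
    unfolding E_def D_def k_def
    by (auto intro!: derivative_eq_intros expE_has_real_derivative denom_has_real_derivative)
  then have "(qsol \<alpha> \<beta> a2 s has_real_derivative
         (s * (inverse v / 2 * (- 3 * k * (- (2 * k / \<beta>) * E * D + E * (- 2 * \<beta> * k * E)))) * D
           - s * v * (- 2 * \<beta> * k * E)) / (D * D)) (at t)"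
    unfolding qsol_def[abs_def] v_def
    using R_pos assms(4) denom_has_real_derivative[of \<alpha> \<beta> a2 t]
    unfolding R_def D_def E_def k_def
    by (auto intro!: derivative_eq_intros)
  also have "(s * (inverse v / 2 * (- 3 * k * (- (2 * k / \<beta>) * E * D + E * (- 2 * \<beta> * k * E)))) * D
           - s * v * (- 2 * \<beta> * k * E)) / (D * D)
        = s * v * k * (\<beta>^2 * E - D) / (\<beta> * D^2)"
    unfolding inv_v using ne assms(1) by (simp add: field_simps power2_eq_square)
  also have "\<beta>^2 * E - D = 3 * a2 * k"
    unfolding D_def E_def k_def denom_def by simp
  also have "s * v * k * (3 * a2 * k) / (\<beta> * D^2) = 3 * a2 * k^2 * (s * v / D) / (\<beta> * D)"
    by (simp add: power2_eq_square ac_simps)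
  finally show ?thesis unfolding qsol_def k_def v_def R_def D_def .
qed

lemma sgn_eq_on_interval:
  fixes f :: "real \<Rightarrow> real"
  assumes "is_interval I" "continuous_on I f" and nz: "\<forall>t\<in>I. f t \<noteq> 0"
    and "a \<in> I" "b \<in> I"
  shows "sgn (f a) = sgn (f b)"
proof (rule ccontr)
  assume "sgn (f a) \<noteq> sgn (f b)"
  moreover have "f a \<noteq> 0" "f b \<noteq> 0" using assms(4,5) nz by auto
  ultimately have "min (f a) (f b) \<le> 0" "0 \<le> max (f a) (f b)"
    by (auto simp: sgn_if split: if_splits)
  moreover have "is_interval (f ` I)"
    using assms(1,2) connected_continuous_image is_interval_connected
    by (simp add: is_interval_connected_1)
  moreover have "min (f a) (f b) \<in> f ` I" "max (f a) (f b) \<in> f ` I"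
    using assms(4,5) by (simp_all add: min_def max_def)
  ultimately have "0 \<in> f ` I" by (blast intro: mem_is_interval_1_I)
  then show False using nz by auto
qed

lemma second_equation_on_level_set:
  fixes q p :: "real \<Rightarrow> real"
  assumes "\<beta> \<noteq> 0" and \<gamma>: "\<beta>^2 * \<gamma> + 3 * \<alpha> * \<beta> - 9 = 0"
    and p: "p = (\<lambda>t. (\<alpha> * \<beta> - 3) * q t / \<beta> + \<beta> / 3 * q t ^ 3)"
    and q': "(q has_real_derivative - p t) (at t)"
  shows "(p has_real_derivative - \<gamma> * q t + q t ^ 3 - (\<alpha> + \<beta> * q t ^ 2) * p t) (at t)"
proof -
  have \<gamma>_eq: "\<gamma> = - 3 * (\<alpha> * \<beta> - 3) / \<beta>^2" using \<gamma> assms(1) by (simp add: field_simps)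
  have "- \<gamma> * q t + q t ^ 3 - (\<alpha> + \<beta> * q t ^ 2) * p t
      = (\<alpha> * \<beta> - 3) / \<beta> * (- p t) + \<beta> / 3 * (3 * q t ^ 2 * (- p t))"
    using assms(1) unfolding p \<gamma>_eq by (simp add: field_simps power2_eq_square power3_eq_cube)
  moreover have "((\<lambda>t. (\<alpha> * \<beta> - 3) / \<beta> * q t + \<beta> / 3 * q t ^ 3) has_real_derivative
      (\<alpha> * \<beta> - 3) / \<beta> * (- p t) + \<beta> / 3 * (of_nat 3 * (- p t * q t ^ (3 - Suc 0)))) (at t)"
    by (intro DERIV_add DERIV_cmult DERIV_power q')
  moreover have "p = (\<lambda>t. (\<alpha> * \<beta> - 3) / \<beta> * q t + \<beta> / 3 * q t ^ 3)"
    unfolding p by auto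
  ultimately show ?thesis by (simp add: mult.commute)
qed

definition bernoulli_integral :: "real \<Rightarrow> real \<Rightarrow> (real \<Rightarrow> real) \<Rightarrow> real \<Rightarrow> real" where
  "bernoulli_integral \<alpha> \<beta> q t = (inverse (q t ^ 2) + \<beta>^2 / (3 * (\<alpha> * \<beta> - 3))) * expE \<alpha> \<beta> t"

lemma bernoulli_integral_has_derivative_zero:
  fixes q p :: "real \<Rightarrow> real"
  assumes "\<beta> \<noteq> 0" "\<alpha> * \<beta> \<noteq> 3" "q t \<noteq> 0"
    and q': "(q has_real_derivative - p t) (at t)"
    and p: "p t = (\<alpha> * \<beta> - 3) * q t / \<beta> + \<beta> / 3 * q t ^ 3"
  shows "(bernoulli_integral \<alpha> \<beta> q has_real_derivative 0) (at t)"
proof -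
  define c where "c = \<beta>^2 / (3 * (\<alpha> * \<beta> - 3))"
  have "((\<lambda>t. inverse (q t ^ 2)) has_real_derivative 2 * p t / q t ^ 3) (at t)"
    using DERIV_inverse'[OF DERIV_power[OF q'], of 2] assms(3)
    by (simp add: field_simps power2_eq_square power3_eq_cube)
  from DERIV_mult[OF DERIV_add[OF this DERIV_const[of c]] expE_has_real_derivative[of \<alpha> \<beta> t]]
  have "((\<lambda>t. (inverse (q t ^ 2) + c) * expE \<alpha> \<beta> t) has_real_derivative
      (2 * p t / q t ^ 3 - 2 * (\<alpha> * \<beta> - 3) / \<beta> * (inverse (q t ^ 2) + c)) * expE \<alpha> \<beta> t) (at t)"
    by (simp add: algebra_simps)
  moreover have "2 * p t / q t ^ 3 - 2 * (\<alpha> * \<beta> - 3) / \<beta> * (inverse (q t ^ 2) + c) = 0"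
    using assms unfolding p c_def by (simp add: field_simps power2_eq_square power3_eq_cube)
  ultimately show ?thesis unfolding bernoulli_integral_def[abs_def] c_def by simp
qed

text \<open>Here denom = -3kE/q^2 has the sign of -k, which fixes the sign in front of the root.\<close>

lemma explicit_form_of_bernoulli_integral:
  assumes "\<alpha> * \<beta> \<noteq> 3" "q t \<noteq> 0" "bernoulli_integral \<alpha> \<beta> q t = a2"
  shows "denom \<alpha> \<beta> a2 t \<noteq> 0" "radicand \<alpha> \<beta> a2 t \<ge> 0"
    and "q t = qsol \<alpha> \<beta> a2 (- sgn (q t) * sgn (\<alpha> * \<beta> - 3)) t"
proof -
  define Q where "Q = q t"
  have a2: "(inverse (Q ^ 2) + \<beta>^2 / (3 * (\<alpha> * \<beta> - 3))) * expE \<alpha> \<beta> t = a2"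
    using assms(3) by (simp add: bernoulli_integral_def Q_def)
  have Q_ne: "Q \<noteq> 0" using assms(2) by (simp add: Q_def)
  define k E where "k = \<alpha> * \<beta> - 3" and "E = expE \<alpha> \<beta> t"
  have ne: "k \<noteq> 0" "E > 0" using assms(1) expE_pos by (auto simp: k_def E_def)
  have D: "denom \<alpha> \<beta> a2 t = - 3 * k * E / Q ^ 2"
    unfolding denom_def a2[symmetric] k_def[symmetric] E_def[symmetric]
    using ne Q_ne by (simp add: field_simps)
  have R: "radicand \<alpha> \<beta> a2 t = (3 * k * E / Q) ^ 2"
    unfolding radicand_eq D k_def[symmetric] E_def[symmetric]
    using Q_ne by (simp add: field_simps power2_eq_square)
  show "denom \<alpha> \<beta> a2 t \<noteq> 0" using ne Q_ne by (simp add: D)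
  show "radicand \<alpha> \<beta> a2 t \<ge> 0" by (simp add: R)
  have "qsol \<alpha> \<beta> a2 (- sgn Q * sgn k) t = - sgn Q * sgn k * \<bar>3 * k * E / Q\<bar> / (- 3 * k * E / Q ^ 2)"
    unfolding qsol_def R D by simp
  also have "\<dots> = Q"
    using ne Q_ne by (simp add: abs_mult abs_divide sgn_if field_simps power2_eq_square)
  finally show "q t = qsol \<alpha> \<beta> a2 (- sgn (q t) * sgn (\<alpha> * \<beta> - 3)) t" by (simp add: k_def Q_def)
qed

lemma firstI2_eq_0_iff:
  "firstI2 \<alpha> \<beta> q p t = 0 \<longleftrightarrow> p t = (\<alpha> * \<beta> - 3) * q t / \<beta> + \<beta> / 3 * q t ^ 3"
  unfolding firstI2_def mult_eq_0_iff by simp linarith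

lemma second_derivative_eq:
  fixes q p :: "real \<Rightarrow> real"
  assumes "open I" "t \<in> I" "\<forall>x\<in>I. (q has_real_derivative - p x) (at x)"
    and "(p has_real_derivative p') (at t)"
  shows "deriv (deriv q) t = - p'"
proof -
  have "\<And>x. x \<in> I \<Longrightarrow> - p x = deriv q x" using assms(3) DERIV_imp_deriv by fastforce
  with DERIV_minus[OF assms(4)] assms(1,2) have "(deriv q has_real_derivative - p') (at t)"
    by (rule has_field_derivative_transform_within_open)
  then show ?thesis by (rule DERIV_imp_deriv)
qed

lemma explicit_solution_solves_system:
  assumes "\<beta> \<noteq> 0" "\<alpha> * \<beta> \<noteq> 3" "\<beta>^2 * \<gamma> + 3 * \<alpha> * \<beta> - 9 = 0" "s \<in> {1, -1}"
    and "open I" and I: "\<forall>t\<in>I. denom \<alpha> \<beta> a2 t \<noteq> 0 \<and> radicand \<alpha> \<beta> a2 t \<ge> 0"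
    and "t \<in> I"
  defines "q \<equiv> qsol \<alpha> \<beta> a2 s" and "p \<equiv> psol \<alpha> \<beta> a2 s"
  shows "(q has_real_derivative - p t) (at t)"
    and "(p has_real_derivative - \<gamma> * q t + q t ^ 3 - (\<alpha> + \<beta> * q t ^ 2) * p t) (at t)"
    and "deriv (deriv q) t + (\<alpha> + \<beta> * q t ^ 2) * deriv q t - \<gamma> * q t + q t ^ 3 = 0"
    and "firstI2 \<alpha> \<beta> q p t = 0"
    and "q t \<noteq> 0"
proof -
  have q': "(q has_real_derivative - p x) (at x)" if "x \<in> I" for x
    using qsol_has_real_derivative[OF assms(1,2,4)] psol_eq_qsol[OF assms(1,4)] I that
    unfolding q_def p_def by auto
  have p_eq: "p = (\<lambda>t. (\<alpha> * \<beta> - 3) * q t / \<beta> + \<beta> / 3 * q t ^ 3)"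
    unfolding p_def q_def psol_def by simp
  have p': "(p has_real_derivative - \<gamma> * q x + q x ^ 3 - (\<alpha> + \<beta> * q x ^ 2) * p x) (at x)"
    if "x \<in> I" for x
    using second_equation_on_level_set[OF assms(1,3) p_eq q'[OF that]] .
  show "(q has_real_derivative - p t) (at t)" using q' assms(7) .
  show "(p has_real_derivative - \<gamma> * q t + q t ^ 3 - (\<alpha> + \<beta> * q t ^ 2) * p t) (at t)"
    using p' assms(7) .
  show "deriv (deriv q) t + (\<alpha> + \<beta> * q t ^ 2) * deriv q t - \<gamma> * q t + q t ^ 3 = 0"
    using second_derivative_eq[OF assms(5,7) _ p'[OF assms(7)]] q' DERIV_imp_deriv[OF q'[OF assms(7)]]
    by (simp add: algebra_simps)
  show "firstI2 \<alpha> \<beta> q p t = 0"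
    unfolding firstI2_eq_0_iff p_eq by simp
  have "radicand \<alpha> \<beta> a2 t > 0" using radicand_pos[OF assms(2)] I assms(7) by blast
  then show "q t \<noteq> 0" using assms(4,7) I unfolding q_def qsol_def by auto
qed

lemma level_set_solution_is_explicit:
  fixes q p :: "real \<Rightarrow> real"
  assumes "\<beta> \<noteq> 0" "\<alpha> * \<beta> \<noteq> 3" and I: "is_interval I"
    and q': "\<forall>t\<in>I. (q has_real_derivative - p t) (at t)"
    and level: "\<forall>t\<in>I. firstI2 \<alpha> \<beta> q p t = 0 \<and> q t \<noteq> 0"
  shows "\<exists>a2 s. s \<in> {1, -1} \<and>
           (\<forall>t\<in>I. denom \<alpha> \<beta> a2 t \<noteq> 0 \<and> radicand \<alpha> \<beta> a2 t \<ge> 0 \<and>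
                   q t = qsol \<alpha> \<beta> a2 s t \<and> p t = psol \<alpha> \<beta> a2 s t)"
proof (cases "I = {}")
  case False
  then obtain t0 where t0: "t0 \<in> I" by auto
  have p_eq: "p t = (\<alpha> * \<beta> - 3) * q t / \<beta> + \<beta> / 3 * q t ^ 3" if "t \<in> I" for t
    using level that firstI2_eq_0_iff by blast
  have "\<exists>a2. \<forall>t\<in>I. bernoulli_integral \<alpha> \<beta> q t = a2"
    using bernoulli_integral_has_derivative_zero[OF assms(1,2)] q' level p_eq
    by (intro has_field_derivative_zero_constant is_interval_convex I)
      (auto intro: has_field_derivative_at_within)
  then obtain a2 where a2: "\<And>t. t \<in> I \<Longrightarrow> bernoulli_integral \<alpha> \<beta> q t = a2" by blast
  define s where "s = - sgn (q t0) * sgn (\<alpha> * \<beta> - 3)"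
  have "continuous_on I q"
    using q' by (blast intro: continuous_at_imp_continuous_on DERIV_isCont)
  with I level t0 have sgn_q: "sgn (q t) = sgn (q t0)" if "t \<in> I" for t
    using sgn_eq_on_interval that by blast
  have explicit: "denom \<alpha> \<beta> a2 t \<noteq> 0 \<and> radicand \<alpha> \<beta> a2 t \<ge> 0 \<and> q t = qsol \<alpha> \<beta> a2 s t"
    if "t \<in> I" for t
  proof -
    have "q t \<noteq> 0" using level that by blast
    moreover have "s = - sgn (q t) * sgn (\<alpha> * \<beta> - 3)" using sgn_q[OF that] by (simp add: s_def)
    ultimately show ?thesis using explicit_form_of_bernoulli_integral[OF assms(2) _ a2[OF that]] by simp
  qed
  have "q t0 \<noteq> 0" using level t0 by blast
  then have "s \<in> {1, -1}" using assms(2) by (auto simp: s_def sgn_if)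
  moreover have "p t = psol \<alpha> \<beta> a2 s t" if "t \<in> I" for t
    using p_eq[OF that] explicit[OF that] by (simp add: psol_def)
  ultimately show ?thesis using explicit by blast
qed (auto intro: exI[of _ 1])

theorem mainTheorem6:
  fixes \<alpha> \<beta> \<gamma> :: real
  assumes "\<beta> \<noteq> 0" and "\<alpha> * \<beta> \<noteq> 3" and "\<beta>^2 * \<gamma> + 3 * \<alpha> * \<beta> - 9 = 0"
  shows
   "(\<forall>a2 s (I :: real set).
       s \<in> {1, -1} \<and> open I \<and> is_interval I \<and>
       (\<forall>t\<in>I. denom \<alpha> \<beta> a2 t \<noteq> 0 \<and> radicand \<alpha> \<beta> a2 t \<ge> 0) \<longrightarrow>
       (let q = qsol \<alpha> \<beta> a2 s; p = psol \<alpha> \<beta> a2 s in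
        \<forall>t\<in>I.
          (q has_real_derivative (- p t)) (at t) \<and>
          (p has_real_derivative
             (- \<gamma> * q t + (q t)^3 - (\<alpha> + \<beta> * (q t)^2) * p t)) (at t) \<and>
          deriv (deriv q) t + (\<alpha> + \<beta> * (q t)^2) * deriv q t - \<gamma> * q t + (q t)^3 = 0 \<and>
          firstI2 \<alpha> \<beta> q p t = 0 \<and> q t \<noteq> 0))
    \<and>
    (\<forall>(q :: real \<Rightarrow> real) (p :: real \<Rightarrow> real) (I :: real set).
       open I \<and> is_interval I \<and>
       (\<forall>t\<in>I. (q has_real_derivative (- p t)) (at t) \<and>
               (p has_real_derivative
                  (- \<gamma> * q t + (q t)^3 - (\<alpha> + \<beta> * (q t)^2) * p t)) (at t)) \<and>
       (\<forall>t\<in>I. firstI2 \<alpha> \<beta> q p t = 0 \<and> q t \<noteq> 0) \<longrightarrow>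
       (\<exists>a2 s. s \<in> {1, -1} \<and>
          (\<forall>t\<in>I. denom \<alpha> \<beta> a2 t \<noteq> 0 \<and> radicand \<alpha> \<beta> a2 t \<ge> 0 \<and>
                  q t = qsol \<alpha> \<beta> a2 s t \<and> p t = psol \<alpha> \<beta> a2 s t)))"
proof (intro conjI allI impI)
  fix a2 s :: real and I :: "real set"
  assume "s \<in> {1, -1} \<and> open I \<and> is_interval I \<and>
    (\<forall>t\<in>I. denom \<alpha> \<beta> a2 t \<noteq> 0 \<and> radicand \<alpha> \<beta> a2 t \<ge> 0)"
  then have s: "s \<in> {1, -1}" and I: "open I" "\<forall>t\<in>I. denom \<alpha> \<beta> a2 t \<noteq> 0 \<and> radicand \<alpha> \<beta> a2 t \<ge> 0"
    by blast+
  note solves = explicit_solution_solves_system[OF assms s I]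
  show "let q = qsol \<alpha> \<beta> a2 s; p = psol \<alpha> \<beta> a2 s in
        \<forall>t\<in>I.
          (q has_real_derivative (- p t)) (at t) \<and>
          (p has_real_derivative
             (- \<gamma> * q t + (q t)^3 - (\<alpha> + \<beta> * (q t)^2) * p t)) (at t) \<and>
          deriv (deriv q) t + (\<alpha> + \<beta> * (q t)^2) * deriv q t - \<gamma> * q t + (q t)^3 = 0 \<and>
          firstI2 \<alpha> \<beta> q p t = 0 \<and> q t \<noteq> 0"
    unfolding Let_def using solves by (intro ballI conjI)
next
  fix q p :: "real \<Rightarrow> real" and I :: "real set"
  assume "open I \<and> is_interval I \<and>
    (\<forall>t\<in>I. (q has_real_derivative (- p t)) (at t) \<and>
      (p has_real_derivative (- \<gamma> * q t + (q t)^3 - (\<alpha> + \<beta> * (q t)^2) * p t)) (at t)) \<and>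
    (\<forall>t\<in>I. firstI2 \<alpha> \<beta> q p t = 0 \<and> q t \<noteq> 0)"
  then have "is_interval I" "\<forall>t\<in>I. (q has_real_derivative (- p t)) (at t)"
    "\<forall>t\<in>I. firstI2 \<alpha> \<beta> q p t = 0 \<and> q t \<noteq> 0"
    by blast+
  then show "\<exists>a2 s. s \<in> {1, -1} \<and>
      (\<forall>t\<in>I. denom \<alpha> \<beta> a2 t \<noteq> 0 \<and> radicand \<alpha> \<beta> a2 t \<ge> 0 \<and>
        q t = qsol \<alpha> \<beta> a2 s t \<and> p t = psol \<alpha> \<beta> a2 s t)"
    by (rule level_set_solution_is_explicit[OF assms(1,2)])
qed

end
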